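(* The continued fraction \[ 80-\cfrac{64}{17+\cfrac{3^4}{32+\cfrac{5^4}{48+\cfrac{7^4}{64+\cdots}}}}, \] i.e. with $a(0)=80$, $a(1)=17$, $a(n)=16n$ for $n\ge2$, $b(0)=-64$, $b(n)=(2n+1)^4$ for $n\ge1$, converges to $\left(\Gamma(1/4)/\Gamma(3/4)\right)^4$.
   Context: The value of the continued fraction with partial denominators $a(n)$ and partial numerators $b(n)$ is $a(0)+\cfrac{b(0)}{a(1)+\cfrac{b(1)}{a(2)+\cdots}}$. *)

theory Defs
  imports "HOL-Analysis.Analysis"
begin

fun cf_tail :: "(nat \<Rightarrow> real) \<Rightarrow> (nat \<Rightarrow> real) \<Rightarrow> nat \<Rightarrow> nat \<Rightarrow> real" where
  "cf_tail a b 0 k = a k"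
| "cf_tail a b (Suc m) k = a k + b k / cf_tail a b m (Suc k)"

definition cf_convergent :: "(nat \<Rightarrow> real) \<Rightarrow> (nat \<Rightarrow> real) \<Rightarrow> nat \<Rightarrow> real" where
  "cf_convergent a b n = cf_tail a b n 0"

definition cf_converges_to :: "(nat \<Rightarrow> real) \<Rightarrow> (nat \<Rightarrow> real) \<Rightarrow> real \<Rightarrow> bool" where
  "cf_converges_to a b L \<longleftrightarrow> (cf_convergent a b \<longlonglongrightarrow> L)"

definition cfA :: "nat \<Rightarrow> real" where
  "cfA n = (if n = 0 then 80 else if n = 1 then 17 else 16 * real n)"

definition cfB :: "nat \<Rightarrow> real" where
  "cfB n = (if n = 0 then -64 else (2 * real n + 1) ^ 4)"

end

theory Submission
  imports Defs "HOL-Real_Asymp.Real_Asymp" "HOL-Probability.Characteristic_Functions"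
begin

text \<open>
  The numerators and denominators of the convergents obey Wallis' recurrences, and for this
  fraction they can be solved in closed form: up to factors that cancel in the quotient, the
  convergents of index \<open>2m\<close> and \<open>2m + 1\<close> are \<open>16 (3/4)\<^sub>m\<^sup>4 / (5/4)\<^sub>m\<^sup>4\<close> times a
  rational function of \<open>m\<close> growing like \<open>16 m\<^sup>2\<close>. Euler's limit formula for \<open>\<Gamma>\<close> gives
  \<open>(3/4)\<^sub>m / (5/4)\<^sub>m \<sim> \<Gamma>(5/4) / (\<Gamma>(3/4) \<surd>m)\<close>, so both subsequences tend to
  \<open>256 (\<Gamma>(5/4) / \<Gamma>(3/4))\<^sup>4 = (\<Gamma>(1/4) / \<Gamma>(3/4))\<^sup>4\<close>.
\<close>

fun cf_num :: "(nat \<Rightarrow> real) \<Rightarrow> (nat \<Rightarrow> real) \<Rightarrow> nat \<Rightarrow> real" where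
  "cf_num a b 0 = a 0"
| "cf_num a b (Suc 0) = a 1 * a 0 + b 0"
| "cf_num a b (Suc (Suc n)) = a (Suc (Suc n)) * cf_num a b (Suc n) + b (Suc n) * cf_num a b n"

fun cf_den :: "(nat \<Rightarrow> real) \<Rightarrow> (nat \<Rightarrow> real) \<Rightarrow> nat \<Rightarrow> real" where
  "cf_den a b 0 = 1"
| "cf_den a b (Suc 0) = a 1"
| "cf_den a b (Suc (Suc n)) = a (Suc (Suc n)) * cf_den a b (Suc n) + b (Suc n) * cf_den a b n"

fun cf_tail_with :: "(nat \<Rightarrow> real) \<Rightarrow> (nat \<Rightarrow> real) \<Rightarrow> nat \<Rightarrow> nat \<Rightarrow> real \<Rightarrow> real" where
  "cf_tail_with a b 0 k x = x"
| "cf_tail_with a b (Suc m) k x = a k + b k / cf_tail_with a b m (Suc k) x"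

lemma cf_tail_eq_cf_tail_with: "cf_tail a b m k = cf_tail_with a b m k (a (k + m))"
  by (induction m arbitrary: k) simp_all

lemma cf_tail_with_Suc:
  "cf_tail_with a b (Suc m) k x = cf_tail_with a b m k (a (k + m) + b (k + m) / x)"
  by (induction m arbitrary: k) simp_all

lemma cf_tail_with_eq_num_den:
  assumes a_pos: "\<And>k. k \<ge> 1 \<Longrightarrow> a k > 0" and b_nonneg: "\<And>k. k \<ge> 1 \<Longrightarrow> b k \<ge> 0"
    and "x > 0"
  shows "cf_tail_with a b (Suc (Suc n)) 0 x =
    (cf_num a b (Suc n) * x + b (Suc n) * cf_num a b n) /
    (cf_den a b (Suc n) * x + b (Suc n) * cf_den a b n)"
  using \<open>x > 0\<close>
proof (induction n arbitrary: x)
  case 0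
  have "a 1 * x + b 1 > 0"
    using 0 a_pos[of 1] b_nonneg[of 1] by (simp add: add_pos_nonneg)
  with 0 show ?case
    by (simp add: field_simps)
next
  case (Suc n)
  define y where "y = a (Suc (Suc n)) + b (Suc (Suc n)) / x"
  have "y > 0"
    using Suc.prems a_pos[of "Suc (Suc n)"] b_nonneg[of "Suc (Suc n)"]
    by (simp add: y_def add_pos_nonneg)
  have num: "cf_num a b (Suc n) * y + b (Suc n) * cf_num a b n =
      (cf_num a b (Suc (Suc n)) * x + b (Suc (Suc n)) * cf_num a b (Suc n)) / x"
    and den: "cf_den a b (Suc n) * y + b (Suc n) * cf_den a b n =
      (cf_den a b (Suc (Suc n)) * x + b (Suc (Suc n)) * cf_den a b (Suc n)) / x"
    using Suc.prems by (simp_all add: y_def field_simps)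
  have "cf_tail_with a b (Suc (Suc (Suc n))) 0 x = cf_tail_with a b (Suc (Suc n)) 0 y"
    by (subst cf_tail_with_Suc) (simp add: y_def)
  also have "\<dots> = (cf_num a b (Suc n) * y + b (Suc n) * cf_num a b n) /
      (cf_den a b (Suc n) * y + b (Suc n) * cf_den a b n)"
    using Suc.IH[OF \<open>y > 0\<close>] .
  finally show ?case
    unfolding num den using Suc.prems by simp
qed

lemma cf_convergent_eq_num_div_den:
  assumes a_pos: "\<And>k. k \<ge> 1 \<Longrightarrow> a k > 0" and b_nonneg: "\<And>k. k \<ge> 1 \<Longrightarrow> b k \<ge> 0"
  shows "cf_convergent a b n = cf_num a b n / cf_den a b n"
proof -
  consider "n = 0" | "n = 1" | m where "n = Suc (Suc m)"
    by (metis One_nat_def not0_implies_Suc)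
  then show ?thesis
  proof cases
    case 2
    then show ?thesis
      using a_pos[of 1] by (simp add: cf_convergent_def field_simps)
  next
    case 3
    have "cf_convergent a b n = cf_tail_with a b (Suc (Suc m)) 0 (a (Suc (Suc m)))"
      unfolding cf_convergent_def cf_tail_eq_cf_tail_with 3 by (simp only: add_0)
    also have "\<dots> = cf_num a b n / cf_den a b n"
      using a_pos[of "Suc (Suc m)"]
      by (simp only: cf_tail_with_eq_num_den[OF assms] 3 cf_num.simps cf_den.simps mult.commute)
    finally show ?thesis .
  qed (simp add: cf_convergent_def)
qed

lemma quarter_pochhammer_Suc_power4:
  "(4 ^ Suc m * pochhammer (c / 4) (Suc m)) ^ 4 = (4 ^ m * pochhammer (c / 4) m) ^ 4 * (4 * real m + c) ^ 4"
proof -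
  have "4 ^ Suc m * pochhammer (c / 4) (Suc m) = 4 ^ m * pochhammer (c / 4) m * (4 * real m + c)"
    by (simp add: pochhammer_Suc algebra_simps)
  then show ?thesis
    by (simp only: power_mult_distrib)
qed

text \<open>Here \<open>4 ^ m * pochhammer (c / 4) m = (\<Prod>j<m. 4 * j + c)\<close>.\<close>

definition cfAB_num :: "nat \<Rightarrow> real" where
  "cfAB_num n = 16 * (4 ^ (n div 2) * pochhammer (3 / 4) (n div 2)) ^ 4 *
    (if even n then (2 * real n + 2) ^ 2 + 1 else (2 * real n + 1) ^ 4)"

definition cfAB_den :: "nat \<Rightarrow> real" where
  "cfAB_den n = (4 ^ (n div 2) * pochhammer (5 / 4) (n div 2)) ^ 4 *
    (if even n then 1 else (2 * real n + 2) ^ 2 + 1)"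

lemma cfAB_num_even:
  "cfAB_num (2 * m) = 16 * (4 ^ m * pochhammer (3 / 4) m) ^ 4 * ((4 * real m + 2) ^ 2 + 1)"
  by (simp add: cfAB_num_def)

lemma cfAB_num_odd:
  "cfAB_num (2 * m + 1) = 16 * (4 ^ m * pochhammer (3 / 4) m) ^ 4 * (4 * real m + 3) ^ 4"
  by (simp add: cfAB_num_def algebra_simps)

lemma cfAB_den_even: "cfAB_den (2 * m) = (4 ^ m * pochhammer (5 / 4) m) ^ 4"
  by (simp add: cfAB_den_def)

lemma cfAB_den_odd:
  "cfAB_den (2 * m + 1) = (4 ^ m * pochhammer (5 / 4) m) ^ 4 * ((4 * real m + 4) ^ 2 + 1)"
  by (simp add: cfAB_den_def algebra_simps)

lemma cfAB_num_rec:
  "cfAB_num (Suc (Suc n)) = cfA (Suc (Suc n)) * cfAB_num (Suc n) + cfB (Suc n) * cfAB_num n"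
proof (cases "even n")
  case True
  then obtain m where n: "n = 2 * m" by (auto elim: evenE)
  define P where "P = (4 ^ m * pochhammer (3 / 4 :: real) m) ^ 4"
  have "cfAB_num (Suc (Suc n)) = 16 * (P * (4 * real m + 3) ^ 4) * ((4 * real (Suc m) + 2) ^ 2 + 1)"
    using cfAB_num_even[of "Suc m"] quarter_pochhammer_Suc_power4[of m 3]
    by (simp add: n P_def)
  moreover have "cfAB_num (Suc n) = 16 * P * (4 * real m + 3) ^ 4"
    using cfAB_num_odd[of m] by (simp add: n P_def)
  moreover have "cfAB_num n = 16 * P * ((4 * real m + 2) ^ 2 + 1)"
    using cfAB_num_even[of m] by (simp add: n P_def)
  moreover have "cfA (Suc (Suc n)) = 32 * (real m + 1)" "cfB (Suc n) = (4 * real m + 3) ^ 4"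
    by (simp_all add: n cfA_def cfB_def algebra_simps)
  moreover have "(4 * real (Suc m) + 2) ^ 2 + 1 = 32 * (real m + 1) + ((4 * real m + 2) ^ 2 + 1)"
    unfolding of_nat_Suc by algebra
  ultimately show ?thesis
    by algebra
next
  case False
  then obtain m where n: "n = 2 * m + 1" by (auto elim: oddE)
  define P where "P = (4 ^ m * pochhammer (3 / 4 :: real) m) ^ 4 * (4 * real m + 3) ^ 4"
  have "cfAB_num (Suc (Suc n)) = 16 * P * (4 * real (Suc m) + 3) ^ 4"
    using cfAB_num_odd[of "Suc m"] quarter_pochhammer_Suc_power4[of m 3]
    by (simp add: n P_def)
  moreover have "cfAB_num (Suc n) = 16 * P * ((4 * real (Suc m) + 2) ^ 2 + 1)"
    using cfAB_num_even[of "Suc m"] quarter_pochhammer_Suc_power4[of m 3]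
    by (simp add: n P_def)
  moreover have "cfAB_num n = 16 * P"
    using cfAB_num_odd[of m] by (simp add: n P_def)
  moreover have "cfA (Suc (Suc n)) = 16 * (2 * real m + 3)" "cfB (Suc n) = (4 * real m + 5) ^ 4"
    by (simp_all add: n cfA_def cfB_def algebra_simps)
  moreover have "(4 * real (Suc m) + 3) ^ 4 =
      16 * (2 * real m + 3) * ((4 * real (Suc m) + 2) ^ 2 + 1) + (4 * real m + 5) ^ 4"
    unfolding of_nat_Suc by algebra
  ultimately show ?thesis
    by algebra
qed

lemma cfAB_den_rec:
  "cfAB_den (Suc (Suc n)) = cfA (Suc (Suc n)) * cfAB_den (Suc n) + cfB (Suc n) * cfAB_den n"
proof (cases "even n")
  case True
  then obtain m where n: "n = 2 * m" by (auto elim: evenE)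
  define Q where "Q = (4 ^ m * pochhammer (5 / 4 :: real) m) ^ 4"
  have "cfAB_den (Suc (Suc n)) = Q * (4 * real m + 5) ^ 4"
    using cfAB_den_even[of "Suc m"] quarter_pochhammer_Suc_power4[of m 5]
    by (simp add: n Q_def)
  moreover have "cfAB_den (Suc n) = Q * ((4 * real m + 4) ^ 2 + 1)"
    using cfAB_den_odd[of m] by (simp add: n Q_def)
  moreover have "cfAB_den n = Q"
    using cfAB_den_even[of m] by (simp add: n Q_def)
  moreover have "cfA (Suc (Suc n)) = 32 * (real m + 1)" "cfB (Suc n) = (4 * real m + 3) ^ 4"
    by (simp_all add: n cfA_def cfB_def algebra_simps)
  ultimately show ?thesis
    by algebra
next
  case False
  then obtain m where n: "n = 2 * m + 1" by (auto elim: oddE)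
  define Q where "Q = (4 ^ m * pochhammer (5 / 4 :: real) m) ^ 4"
  have "cfAB_den (Suc (Suc n)) = Q * (4 * real m + 5) ^ 4 * ((4 * real (Suc m) + 4) ^ 2 + 1)"
    using cfAB_den_odd[of "Suc m"] quarter_pochhammer_Suc_power4[of m 5]
    by (simp add: n Q_def)
  moreover have "cfAB_den (Suc n) = Q * (4 * real m + 5) ^ 4"
    using cfAB_den_even[of "Suc m"] quarter_pochhammer_Suc_power4[of m 5]
    by (simp add: n Q_def)
  moreover have "cfAB_den n = Q * ((4 * real m + 4) ^ 2 + 1)"
    using cfAB_den_odd[of m] by (simp add: n Q_def)
  moreover have "cfA (Suc (Suc n)) = 16 * (2 * real m + 3)" "cfB (Suc n) = (4 * real m + 5) ^ 4"
    by (simp_all add: n cfA_def cfB_def algebra_simps)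
  moreover have "(4 * real (Suc m) + 4) ^ 2 + 1 = 16 * (2 * real m + 3) + ((4 * real m + 4) ^ 2 + 1)"
    unfolding of_nat_Suc by algebra
  ultimately show ?thesis
    by algebra
qed

lemma cf_num_cfA_cfB: "cf_num cfA cfB n = cfAB_num n"
proof (induction n rule: induct_nat_012)
  case (ge2 n)
  then show ?case
    by (simp add: cfAB_num_rec)
qed (simp_all add: cfAB_num_def cfA_def cfB_def)

lemma cf_den_cfA_cfB: "cf_den cfA cfB n = cfAB_den n"
proof (induction n rule: induct_nat_012)
  case (ge2 n)
  then show ?case
    by (simp add: cfAB_den_rec)
qed (simp_all add: cfAB_den_def cfA_def cfB_def)

lemma cf_convergent_cfA_cfB: "cf_convergent cfA cfB n = cfAB_num n / cfAB_den n"
  by (simp add: cf_convergent_eq_num_div_den cf_num_cfA_cfB cf_den_cfA_cfB cfA_def cfB_def)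

lemma pochhammer_ratio_tendsto:
  fixes a b :: real
  assumes "a > 0" "b > 0"
  shows "(\<lambda>n. pochhammer a n / pochhammer b n * real n powr (b - a)) \<longlonglongrightarrow> Gamma b / Gamma a"
proof -
  have "(\<lambda>n. Gamma_series' b n / Gamma_series' a n) \<longlonglongrightarrow> Gamma b / Gamma a"
    using Gamma_real_pos[OF assms(1)] by (intro tendsto_intros Gamma_series'_LIMSEQ) simp
  moreover have "\<forall>\<^sub>F n in sequentially. Gamma_series' b n / Gamma_series' a n =
      pochhammer a n / pochhammer b n * real n powr (b - a)"
    using eventually_gt_at_top[of 0]
  proof eventually_elim
    case (elim n)
    have "pochhammer a n > 0" "pochhammer b n > 0"
      using assms by (simp_all add: pochhammer_pos)
    with elim show ?case
      by (simp add: Gamma_series'_def powr_def exp_diff field_simps)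
  qed
  ultimately show ?thesis
    by (rule Lim_transform_eventually)
qed

lemma quarter_pochhammer_ratio_limit:
  assumes "(\<lambda>m. g m / (real m) ^ 2) \<longlonglongrightarrow> 16"
  shows "(\<lambda>m. 16 * (pochhammer (3 / 4) m / pochhammer (5 / 4) m) ^ 4 * g m)
    \<longlonglongrightarrow> 256 * (Gamma (5 / 4) / Gamma (3 / 4)) ^ 4"
proof -
  have "(\<lambda>m. pochhammer (3 / 4) m / pochhammer (5 / 4) m * real m powr (1 / 2))
      \<longlonglongrightarrow> Gamma (5 / 4) / Gamma (3 / 4 :: real)"
    using pochhammer_ratio_tendsto[of "3 / 4" "5 / 4"] by simp
  then have "(\<lambda>m. 16 * (pochhammer (3 / 4) m / pochhammer (5 / 4) m * real m powr (1 / 2)) ^ 4 *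
      (g m / (real m) ^ 2)) \<longlonglongrightarrow> 16 * (Gamma (5 / 4) / Gamma (3 / 4)) ^ 4 * 16"
    by (intro tendsto_intros assms)
  moreover have "\<forall>\<^sub>F m in sequentially.
      16 * (pochhammer (3 / 4) m / pochhammer (5 / 4) m * real m powr (1 / 2)) ^ 4 * (g m / (real m) ^ 2) =
      16 * (pochhammer (3 / 4) m / pochhammer (5 / 4) m) ^ 4 * g m"
    using eventually_gt_at_top[of 0]
  proof eventually_elim
    case (elim m)
    have "(real m powr (1 / 2)) ^ 4 = (real m) ^ 2"
      using elim by (simp add: powr_power powr_numeral)
    with elim show ?case
      by (simp add: power_mult_distrib power_divide)
  qed
  ultimately show ?thesis
    by (auto intro: Lim_transform_eventually)
qed

lemma cf_convergent_cfA_cfB_even: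
  "cf_convergent cfA cfB (2 * m) =
    16 * (pochhammer (3 / 4) m / pochhammer (5 / 4) m) ^ 4 * ((4 * real m + 2) ^ 2 + 1)"
  by (simp add: cf_convergent_cfA_cfB cfAB_num_even cfAB_den_even power_mult_distrib power_divide)

lemma cf_convergent_cfA_cfB_odd:
  "cf_convergent cfA cfB (2 * m + 1) =
    16 * (pochhammer (3 / 4) m / pochhammer (5 / 4) m) ^ 4 * ((4 * real m + 3) ^ 4 / ((4 * real m + 4) ^ 2 + 1))"
  unfolding cf_convergent_cfA_cfB cfAB_num_odd cfAB_den_odd
  by (simp add: power_mult_distrib power_divide)

lemma Gamma_quarter_eq: "Gamma (1 / 4 :: real) = 4 * Gamma (5 / 4)"
proof -
  have "Gamma (5 / 4 :: real) = Gamma (1 / 4 + 1)"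
    by simp
  also have "\<dots> = 1 / 4 * Gamma (1 / 4)"
    by (subst Gamma_plus1) auto
  finally show ?thesis
    by simp
qed

theorem mainTheorem2:
  shows "cf_converges_to cfA cfB ((Gamma (1/4) / Gamma (3/4)) ^ 4)"
proof -
  have "(\<lambda>m. cf_convergent cfA cfB (2 * m)) \<longlonglongrightarrow> 256 * (Gamma (5 / 4) / Gamma (3 / 4)) ^ 4"
    unfolding cf_convergent_cfA_cfB_even by (rule quarter_pochhammer_ratio_limit) real_asymp
  moreover have "(\<lambda>m. cf_convergent cfA cfB (2 * m + 1)) \<longlonglongrightarrow> 256 * (Gamma (5 / 4) / Gamma (3 / 4)) ^ 4"
    unfolding cf_convergent_cfA_cfB_odd by (rule quarter_pochhammer_ratio_limit) real_asymp
  ultimately show ?thesis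
    unfolding cf_converges_to_def Gamma_quarter_eq by (simp add: limseq_even_odd power_divide power_mult_distrib)
qed

end
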